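(* Let $q$ be an odd prime power and $\varphi_4$ the coloring defined below (with $d=4$). No set $S\subseteq(\mathbb{F}_q^* )^4$ of $8$ vectors has a leftover structure under $\varphi_4$.
   Context: Let $d=4$. $\mathbb{F}_q^*$ is the set of nonzero elements of $\mathbb{F}_q$, endowed with an arbitrary fixed linear order; $(\mathbb{F}_q^* )^d$ is ordered lexicographically with respect to it. Let $C_d = \mathrm{DOT} \sqcup \mathrm{ZERO}\sqcup\mathrm{UP}\sqcup\mathrm{DOWN}$, where $\mathrm{DOT} = \mathbb{F}_q^*$ and ZERO, UP, DOWN are three disjoint copies of $\{1,\dots,d\}\times \mathbb{F}_q$. For distinct $x<y$ in $(\mathbb{F}_q^* )^d$, let $i$ be the first coordinate where $x$ and $y$ differ, and $x\cdot y$ the standard dot product; $\varphi_d(x,y)=\varphi_d(y,x)$ is $(i,x_i+y_i)$ in ZERO if $x\cdot y=0$; $(i,x_i+y_i)$ in UP if $x\cdot y\ne 0$ and $x\cdot y=x\cdot x$; $(i,x_i+y_i)$ in DOWN if $x\cdot y\notin\{0,x\cdot x\}$ and $x\cdot y=y\cdot y$; and $x\cdot y\in\mathrm{DOT}$ otherwise. For a vertex set $A$, $\varphi_d(A)$ is the set of colors on pairs inside $A$. $S$ has a leftover structure under $\varphi_d$ if $|S|=1$, or $S$ has a partition $S=A\cup B$ into nonempty sets such that $A$ and $B$ each have a leftover structure, $\varphi_d(A)\cap\varphi_d(B)=\emptyset$, and there is a color $\gamma$ with $\varphi_d(a,b)=\gamma$ for all $a\in A$, $b\in B$ and $\gamma\notin\varphi_d(A)\cup\varphi_d(B)$.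 *)

theory Defs
  imports Main
begin

text \<open>Colors of C_d. Coordinate indices are 0-based (0..d-1) instead of 1..d.\<close>
datatype 'a color = DOT 'a | ZERO nat 'a | UP nat 'a | DOWN nat 'a

text \<open>Vectors of (F_q^*)^d, represented as functions nat => 'a, nonzero on {0..<d},
  zero outside.\<close>
definition vecs :: "nat \<Rightarrow> (nat \<Rightarrow> 'a::zero) set" where
  "vecs d = {x. (\<forall>i<d. x i \<noteq> 0) \<and> (\<forall>i\<ge>d. x i = 0)}"

definition dotp :: "nat \<Rightarrow> (nat \<Rightarrow> 'a::comm_ring_1) \<Rightarrow> (nat \<Rightarrow> 'a) \<Rightarrow> 'a" where
  "dotp d x y = (\<Sum>i<d. x i * y i)"

definition first_diff :: "(nat \<Rightarrow> 'a) \<Rightarrow> (nat \<Rightarrow> 'a) \<Rightarrow> nat" where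
  "first_diff x y = (LEAST i. x i \<noteq> y i)"

definition lex_less :: "'a rel \<Rightarrow> (nat \<Rightarrow> 'a) \<Rightarrow> (nat \<Rightarrow> 'a) \<Rightarrow> bool" where
  "lex_less r x y = (x \<noteq> y \<and> (x (first_diff x y), y (first_diff x y)) \<in> r)"

definition phi_ord :: "nat \<Rightarrow> (nat \<Rightarrow> 'a::field) \<Rightarrow> (nat \<Rightarrow> 'a) \<Rightarrow> 'a color" where
  "phi_ord d x y = (let i = first_diff x y; s = x i + y i; p = dotp d x y in
     if p = 0 then ZERO i s
     else if p = dotp d x x then UP i s
     else if p = dotp d y y then DOWN i s
     else DOT p)"

definition phi :: "nat \<Rightarrow> 'a rel \<Rightarrow> (nat \<Rightarrow> 'a::field) \<Rightarrow> (nat \<Rightarrow> 'a) \<Rightarrow> 'a color" where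
  "phi d r x y = (if lex_less r x y then phi_ord d x y else phi_ord d y x)"

definition colors :: "('v \<Rightarrow> 'v \<Rightarrow> 'c) \<Rightarrow> 'v set \<Rightarrow> 'c set" where
  "colors c A = {c a b | a b. a \<in> A \<and> b \<in> A \<and> a \<noteq> b}"

inductive leftover :: "('v \<Rightarrow> 'v \<Rightarrow> 'c) \<Rightarrow> 'v set \<Rightarrow> bool" for c where
  single: "leftover c {v}"
| split: "\<lbrakk> A \<noteq> {}; B \<noteq> {}; A \<inter> B = {}; leftover c A; leftover c B;
            colors c A \<inter> colors c B = {};
            \<forall>a\<in>A. \<forall>b\<in>B. c a b = \<gamma>; \<gamma> \<notin> colors c A \<union> colors c B \<rbrakk>
          \<Longrightarrow> leftover c (A \<union> B)"

end

(* Write L(T) = diff_span T for the span of the differences of a set T of vectors.  If S = A \<union> B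
   is the top split of a leftover structure, the bridging colour makes L(A) orthogonal to B (or
   L(B) orthogonal to A), and some vector of B lies outside L(B): a DOT colour pins the dot
   products across the split to a nonzero constant, the other colours fix a coordinate on which
   A and B disagree.  As mutually orthogonal subspaces of F^4 have dimensions adding up to at
   most 4 (Gaussian elimination, valid over any field), dim L(A) + dim L(B) < dim L(A) + dim
   span(B) \<le> 4.  Moreover a - b lies in L(A \<union> B) but in neither L(A) nor L(B), so
   dim L(A \<union> B) exceeds both.  Induction over the leftover structure then gives
   |T| \<le> max 1 (2 dim L(T)), and for the top split 8 = |A| + |B| \<le> 7.  Neither the parity
   of q nor the order r plays a role. *)

theory Submission
  imports Defs "HOL-Library.Function_Algebras" "HOL.Vector_Spaces"
begin

section \<open>The coordinate space of functions on the naturals\<close>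

definition fscale :: "'a::field \<Rightarrow> (nat \<Rightarrow> 'a) \<Rightarrow> nat \<Rightarrow> 'a" where
  "fscale c x = (\<lambda>i. c * x i)"

lemma fscale_apply [simp]: "fscale c x i = c * x i"
  by (simp add: fscale_def)

interpretation fv: vector_space "fscale :: 'a::field \<Rightarrow> (nat \<Rightarrow> 'a) \<Rightarrow> nat \<Rightarrow> 'a"
  by unfold_locales (auto simp: fun_eq_iff algebra_simps)

definition supported_below :: "nat \<Rightarrow> (nat \<Rightarrow> 'a::zero) set" where
  "supported_below n = {x. \<forall>i\<ge>n. x i = 0}"

lemma vecs_subset_supported_below: "vecs n \<subseteq> supported_below n"
  by (auto simp: vecs_def supported_below_def)

lemma subspace_supported_below: "fv.subspace (supported_below n)"
  by (auto simp: fv.subspace_def supported_below_def)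

lemma span_subset_supported_below:
  "X \<subseteq> supported_below n \<Longrightarrow> fv.span X \<subseteq> supported_below n"
  by (rule fv.span_minimal[OF _ subspace_supported_below])

lemma linear_functional_vanishes_on_span:
  fixes f :: "(nat \<Rightarrow> 'a::field) \<Rightarrow> 'a"
  assumes "x \<in> fv.span X" and "\<And>x. x \<in> X \<Longrightarrow> f x = 0"
    and "\<And>x y. f (x + y) = f x + f y" and "\<And>c x. f (fscale c x) = c * f x"
  shows "f x = 0"
proof -
  have "f 0 = 0"
    using assms(4)[of 0 0] by (simp add: fscale_def zero_fun_def)
  then have "fv.subspace {x. f x = 0}"
    using assms(3,4) by (auto simp: fv.subspace_def)
  then show ?thesis
    using fv.span_minimal[of X "{x. f x = 0}"] assms(1,2) by blast
qed

lemma dotp_add_left: "dotp n (x + y) z = dotp n x z + dotp n y z"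
  by (simp add: dotp_def sum.distrib algebra_simps)

lemma dotp_diff_left: "dotp n (x - y) z = dotp n x z - dotp n y z"
  by (simp add: dotp_def sum_subtractf algebra_simps)

lemma dotp_scale_left: "dotp n (fscale c x) z = c * dotp n x z"
  by (simp add: dotp_def sum_distrib_left algebra_simps)

lemma dotp_commute: "dotp n x y = dotp n y x"
  by (simp add: dotp_def mult.commute)

lemma dotp_Suc: "dotp (Suc n) x y = dotp n x y + x n * y n"
  by (simp add: dotp_def)

lemma dotp_span_orthogonal:
  fixes X Y :: "(nat \<Rightarrow> 'a::field) set"
  assumes "\<And>x y. x \<in> X \<Longrightarrow> y \<in> Y \<Longrightarrow> dotp n x y = 0"
    and "x \<in> fv.span X" and "y \<in> fv.span Y"
  shows "dotp n x y = 0"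
proof -
  have "dotp n y x' = 0" if "x' \<in> X" for x'
    using linear_functional_vanishes_on_span[where f = "\<lambda>u. dotp n u x'", OF \<open>y \<in> fv.span Y\<close>]
      assms(1)[OF that] dotp_commute[of n _ x'] dotp_add_left dotp_scale_left
    by metis
  then have "dotp n x' y = 0" if "x' \<in> X" for x'
    using that dotp_commute[of n x' y] by simp
  then show ?thesis
    using linear_functional_vanishes_on_span[where f = "\<lambda>u. dotp n u y", OF \<open>x \<in> fv.span X\<close>]
      dotp_add_left dotp_scale_left
    by metis
qed

section \<open>Orthogonal independent sets\<close>

lemma module_hom_fscale:
  fixes f :: "(nat \<Rightarrow> 'a::field) \<Rightarrow> nat \<Rightarrow> 'a"
  assumes "\<And>x y. f (x + y) = f x + f y" and "\<And>c x. f (fscale c x) = fscale c (f x)"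
  shows "module_hom fscale fscale f"
  using fv.vector_space_axioms assms
  by (auto simp: module_hom_def module_hom_axioms_def module_iff_vector_space)

lemma inj_on_span_if_trivial_kernel:
  fixes f :: "(nat \<Rightarrow> 'a::field) \<Rightarrow> nat \<Rightarrow> 'a"
  assumes "module_hom fscale fscale f" and "\<And>x. x \<in> fv.span X \<Longrightarrow> f x = 0 \<Longrightarrow> x = 0"
  shows "inj_on f (fv.span X)"
  unfolding module_hom.inj_on_iff_eq_0[OF assms(1) fv.subspace_span] using assms(2) by blast

lemma module_hom_drop_coord: "module_hom fscale fscale (\<lambda>u::nat \<Rightarrow> 'a::field. u(n := 0))"
  by (rule module_hom_fscale) (auto simp: fun_eq_iff)

lemma module_hom_eliminate_coord:
  "module_hom fscale fscale (\<lambda>w::nat \<Rightarrow> 'a::field. w - fscale (w n / v n) v)"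
  by (rule module_hom_fscale) (auto simp: fun_eq_iff add_divide_distrib algebra_simps)

lemma inj_on_span_drop_coord:
  fixes U :: "(nat \<Rightarrow> 'a::field) set"
  assumes "\<forall>u\<in>U. dotp (Suc n) u v = 0" and "v n \<noteq> 0"
  shows "inj_on (\<lambda>u. u(n := 0)) (fv.span U)"
proof -
  have kernel: "x = 0" if "x \<in> fv.span U" and "x(n := 0) = 0" for x
  proof -
    have off_n: "x i = 0" if "i \<noteq> n" for i
      using fun_cong[OF \<open>x(n := 0) = 0\<close>, of i] that by simp
    then have "dotp (Suc n) x v = x n * v n"
      by (simp add: dotp_Suc dotp_def)
    moreover have "dotp (Suc n) x v = 0"
      by (rule dotp_span_orthogonal[OF _ \<open>x \<in> fv.span U\<close> fv.span_base[of v "{v}"]])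
         (use assms(1) in auto)
    ultimately have "x n = 0"
      using assms(2) by simp
    show "x = 0"
    proof
      show "x i = 0 i" for i
        using off_n \<open>x n = 0\<close> by (cases "i = n") auto
    qed
  qed
  show ?thesis
    using module_hom_drop_coord kernel by (rule inj_on_span_if_trivial_kernel)
qed

lemma inj_on_span_eliminate_coord:
  fixes V :: "(nat \<Rightarrow> 'a::field) set"
  assumes "fv.independent V" and "v \<in> V"
  shows "inj_on (\<lambda>w. w - fscale (w n / v n) v) (fv.span (V - {v}))"
proof -
  have kernel: "w = 0" if "w \<in> fv.span (V - {v})" and "w - fscale (w n / v n) v = 0" for w
  proof (rule ccontr)
    define c where "c = w n / v n"
    assume "w \<noteq> 0"
    have w: "w = fscale c v"
      using that(2) by (simp add: c_def)
    with \<open>w \<noteq> 0\<close> have "c \<noteq> 0"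
      by (auto simp: fun_eq_iff)
    then have "v = fscale (inverse c) w"
      by (simp add: w fv.scale_scale)
    then have "v \<in> fv.span (V - {v})"
      using fv.span_scale[OF that(1)] by simp
    then show False
      using assms fv.dependent_def by blast
  qed
  show ?thesis
    using module_hom_eliminate_coord kernel by (rule inj_on_span_if_trivial_kernel)
qed

lemma eliminate_coord_supported_below:
  assumes "V \<subseteq> supported_below (Suc n)" and "v \<in> V" and "v n \<noteq> 0"
  shows "(\<lambda>w. w - fscale (w n / v n) v) ` V \<subseteq> supported_below n"
proof (clarsimp simp: supported_below_def)
  fix w i assume "w \<in> V" and "n \<le> i"
  show "w i = w n * v i / v n"
  proof (cases "i = n")
    case True
    then show ?thesis using assms(3) by simp
  next
    case False
    with \<open>n \<le> i\<close> have "Suc n \<le> i" by simp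
    then have "w i = 0" and "v i = 0"
      using assms(1,2) \<open>w \<in> V\<close> by (auto simp: supported_below_def)
    then show ?thesis by simp
  qed
qed

lemma dotp_drop_eliminate_coord:
  assumes "v n \<noteq> 0"
  shows "dotp n (u(n := 0)) (w - fscale (w n / v n) v)
    = dotp (Suc n) u w - (w n / v n) * dotp (Suc n) u v"
proof -
  have "dotp n (u(n := 0)) (w - fscale (w n / v n) v) = dotp (Suc n) u (w - fscale (w n / v n) v)"
    using assms by (simp add: dotp_Suc dotp_def)
  also have "\<dots> = dotp (Suc n) u w - (w n / v n) * dotp (Suc n) u v"
    by (simp add: dotp_def sum_subtractf sum_distrib_left algebra_simps)
  finally show ?thesis .
qed

lemma independent_supported_below_0:
  assumes "fv.independent U" and "U \<subseteq> supported_below 0"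
  shows "U = {}"
proof -
  have "U \<subseteq> {0}"
    using assms(2) by (auto simp: supported_below_def fun_eq_iff)
  moreover have "0 \<notin> U"
    using assms(1) fv.dependent_zero by blast
  ultimately show ?thesis
    by blast
qed

lemma supported_below_SucD:
  assumes "x \<in> supported_below (Suc n)" and "x n = 0"
  shows "x \<in> supported_below n"
  unfolding supported_below_def
proof (intro CollectI allI impI)
  fix i assume "n \<le> i"
  then consider "i = n" | "Suc n \<le> i" by linarith
  then show "x i = 0"
    using assms by cases (auto simp: supported_below_def)
qed

definition orthogonal_independent :: "nat \<Rightarrow> (nat \<Rightarrow> 'a::field) set \<Rightarrow> (nat \<Rightarrow> 'a) set \<Rightarrow> bool" where
  "orthogonal_independent n U V \<longleftrightarrow>
     finite U \<and> finite V \<and> fv.independent U \<and> fv.independent V \<and>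
     U \<subseteq> supported_below n \<and> V \<subseteq> supported_below n \<and> (\<forall>u\<in>U. \<forall>v\<in>V. dotp n u v = 0)"

lemma orthogonal_independent_commute:
  assumes "orthogonal_independent n U V"
  shows "orthogonal_independent n V U"
proof -
  have "\<forall>v\<in>V. \<forall>u\<in>U. dotp n v u = 0"
    using assms dotp_commute unfolding orthogonal_independent_def by metis
  with assms show ?thesis
    unfolding orthogonal_independent_def by blast
qed

lemma orthogonal_independent_restrict:
  assumes "orthogonal_independent (Suc n) U V" and "\<forall>u\<in>U. u n = 0" and "\<forall>v\<in>V. v n = 0"
  shows "orthogonal_independent n U V"
proof -
  have "U \<subseteq> supported_below n" and "V \<subseteq> supported_below n"
    using assms supported_below_SucD unfolding orthogonal_independent_def by blast+
  moreover have "\<forall>u\<in>U. \<forall>v\<in>V. dotp n u v = 0"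
    using assms unfolding orthogonal_independent_def
    by (metis add.right_neutral dotp_Suc mult_zero_left)
  ultimately show ?thesis
    using assms(1) unfolding orthogonal_independent_def by blast
qed

(* One step of Gaussian elimination on the last coordinate n: the pivot v clears coordinate n
   of the rest of V, while coordinate n of U can simply be dropped as span U is orthogonal to v. *)
lemma orthogonal_pivot_step:
  fixes U V :: "(nat \<Rightarrow> 'a::field) set"
  assumes "orthogonal_independent (Suc n) U V" and "v \<in> V" and "v n \<noteq> 0"
  obtains U' V' :: "(nat \<Rightarrow> 'a) set"
    where "orthogonal_independent n U' V'" and "card U' = card U" and "card V' = card V - 1"
proof -
  let ?drop = "\<lambda>u. u(n := 0)" and ?elim = "\<lambda>w. w - fscale (w n / v n) v"
  have U: "finite U" "fv.independent U" "U \<subseteq> supported_below (Suc n)"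
    and V: "finite V" "fv.independent V" "V \<subseteq> supported_below (Suc n)"
    and orth: "\<forall>u\<in>U. \<forall>w\<in>V. dotp (Suc n) u w = 0"
    using assms(1) unfolding orthogonal_independent_def by blast+
  have inj_drop: "inj_on ?drop (fv.span U)"
    using orth assms(2,3) by (intro inj_on_span_drop_coord) auto
  have inj_elim: "inj_on ?elim (fv.span (V - {v}))"
    using V(2) assms(2) by (rule inj_on_span_eliminate_coord)
  have "fv.independent (V - {v})"
    using V(2) by (rule fv.independent_mono) auto
  then have "fv.independent (?drop ` U)" and "fv.independent (?elim ` (V - {v}))"
    using module_hom.independent_injective_image[OF module_hom_drop_coord U(2) inj_drop]
      module_hom.independent_injective_image[OF module_hom_eliminate_coord _ inj_elim]
    by blast+
  moreover have "?drop ` U \<subseteq> supported_below n"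
    using U(3) by (auto simp: supported_below_def)
  moreover have "?elim ` (V - {v}) \<subseteq> supported_below n"
    using eliminate_coord_supported_below[OF V(3) assms(2,3)] by blast
  moreover have "dotp n u' w' = 0"
    if images: "u' \<in> ?drop ` U" "w' \<in> ?elim ` (V - {v})" for u' w'
  proof -
    obtain u w where "u \<in> U" and "w \<in> V" and u': "u' = u(n := 0)" and w': "w' = ?elim w"
      using images by blast
    have "dotp n u' w' = dotp (Suc n) u w - (w n / v n) * dotp (Suc n) u v"
      unfolding u' w' using assms(3) by (rule dotp_drop_eliminate_coord)
    also have "\<dots> = 0"
      using orth assms(2) \<open>u \<in> U\<close> \<open>w \<in> V\<close> by simp
    finally show ?thesis .
  qed
  ultimately have "orthogonal_independent n (?drop ` U) (?elim ` (V - {v}))"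
    using U(1) V(1) unfolding orthogonal_independent_def by blast
  moreover have "card (?drop ` U) = card U"
    using inj_on_subset[OF inj_drop fv.span_superset] by (rule card_image)
  moreover have "card (?elim ` (V - {v})) = card V - 1"
    using card_image[OF inj_on_subset[OF inj_elim fv.span_superset]] V(1) assms(2) by simp
  ultimately show thesis
    by (rule that)
qed

lemma card_orthogonal_independent_le:
  fixes U V :: "(nat \<Rightarrow> 'a::field) set"
  shows "orthogonal_independent n U V \<Longrightarrow> card U + card V \<le> n"
proof (induction n arbitrary: U V)
  case 0
  then have "U = {}" and "V = {}"
    using independent_supported_below_0 unfolding orthogonal_independent_def by blast+
  then show ?case by simp
next
  case (Suc n)
  have pivot: "card U + card V \<le> Suc n"
    if hyps: "orthogonal_independent (Suc n) U V" "v \<in> V" "v n \<noteq> 0"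
    for U V :: "(nat \<Rightarrow> 'a) set" and v
  proof -
    obtain U' V' :: "(nat \<Rightarrow> 'a) set"
      where "orthogonal_independent n U' V'" and "card U' = card U" and "card V' = card V - 1"
      using hyps by (rule orthogonal_pivot_step)
    moreover have "card V \<ge> 1"
      using hyps(1,2) by (auto simp: orthogonal_independent_def Suc_le_eq card_gt_0_iff)
    ultimately show ?thesis
      using Suc.IH by fastforce
  qed
  consider (pivot_V) v where "v \<in> V" "v n \<noteq> 0" | (pivot_U) u where "u \<in> U" "u n \<noteq> 0"
    | (no_pivot) "\<forall>u\<in>U. u n = 0" "\<forall>v\<in>V. v n = 0"
    by blast
  then show ?case
  proof cases
    case pivot_V
    then show ?thesis by (rule pivot[OF Suc.prems])
  next
    case pivot_U
    then have "card V + card U \<le> Suc n"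
      by (intro pivot[OF orthogonal_independent_commute[OF Suc.prems]])
    then show ?thesis by simp
  next
    case no_pivot
    then show ?thesis
      using Suc.IH[OF orthogonal_independent_restrict[OF Suc.prems no_pivot]] by simp
  qed
qed

lemma independent_supported_below_bound:
  fixes U :: "(nat \<Rightarrow> 'a::field) set"
  assumes "fv.independent U" and "U \<subseteq> supported_below n"
  shows "finite U \<and> card U \<le> n"
proof (rule finite_if_finite_subsets_card_bdd)
  fix G assume "G \<subseteq> U" and "finite G"
  then have "orthogonal_independent n G {}"
    using fv.independent_mono[OF assms(1)] assms(2) unfolding orthogonal_independent_def by auto
  then show "card G \<le> n"
    using card_orthogonal_independent_le by fastforce
qed

lemma dim_orthogonal_le:
  fixes X Y :: "(nat \<Rightarrow> 'a::field) set"
  assumes "X \<subseteq> supported_below n" and "Y \<subseteq> supported_below n"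
    and "\<forall>x\<in>X. \<forall>y\<in>Y. dotp n x y = 0"
  shows "fv.dim X + fv.dim Y \<le> n"
proof -
  obtain I where I: "I \<subseteq> X" "fv.independent I" "X \<subseteq> fv.span I" "card I = fv.dim X"
    by (rule fv.basis_exists)
  obtain J where J: "J \<subseteq> Y" "fv.independent J" "Y \<subseteq> fv.span J" "card J = fv.dim Y"
    by (rule fv.basis_exists)
  have I_supp: "I \<subseteq> supported_below n" and J_supp: "J \<subseteq> supported_below n"
    using order_trans[OF I(1) assms(1)] order_trans[OF J(1) assms(2)] .
  have "\<forall>u\<in>I. \<forall>v\<in>J. dotp n u v = 0"
    using I(1) J(1) assms(3) by blast
  moreover have "finite I" and "finite J"
    using independent_supported_below_bound[OF I(2) I_supp]
      independent_supported_below_bound[OF J(2) J_supp] by simp_all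
  ultimately have "orthogonal_independent n I J"
    using I(2) J(2) I_supp J_supp unfolding orthogonal_independent_def by blast
  then have "card I + card J \<le> n"
    by (rule card_orthogonal_independent_le)
  then show ?thesis
    using I(4) J(4) by simp
qed

lemma dim_less_if_not_in_span:
  fixes V W :: "(nat \<Rightarrow> 'a::field) set"
  assumes "W \<subseteq> supported_below n" and "V \<subseteq> fv.span W"
    and "w \<in> fv.span W" and "w \<notin> fv.span V"
  shows "fv.dim V < fv.dim W"
proof -
  obtain I where I: "I \<subseteq> V" "fv.independent I" "V \<subseteq> fv.span I" "card I = fv.dim V"
    by (rule fv.basis_exists)
  obtain K where K: "K \<subseteq> W" "fv.independent K" "W \<subseteq> fv.span K" "card K = fv.dim W"
    by (rule fv.basis_exists)
  have "finite K"
    using independent_supported_below_bound[OF K(2) order_trans[OF K(1) assms(1)]] by simp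
  have span_W: "fv.span W \<subseteq> fv.span K"
    using K(3) by (rule fv.span_minimal[OF _ fv.subspace_span])
  have "w \<notin> fv.span I"
    using fv.span_mono[OF I(1)] assms(4) by blast
  then have "fv.independent (insert w I)" and "w \<notin> I"
    using fv.independent_insertI[OF _ I(2)] fv.span_base[of w I] by auto
  moreover have "insert w I \<subseteq> fv.span K"
    using I(1) assms(2,3) span_W by blast
  ultimately have "finite (insert w I) \<and> card (insert w I) \<le> card K"
    by (intro fv.independent_span_bound[OF \<open>finite K\<close>])
  with \<open>w \<notin> I\<close> have "card I < card K"
    by auto
  then show ?thesis
    using I(4) K(4) by simp
qed

section \<open>Difference spans\<close>

definition diff_span :: "(nat \<Rightarrow> 'a::field) set \<Rightarrow> (nat \<Rightarrow> 'a) set" where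
  "diff_span T = fv.span {x - y | x y. x \<in> T \<and> y \<in> T}"

lemma diff_mem_diff_span: "x \<in> T \<Longrightarrow> y \<in> T \<Longrightarrow> x - y \<in> diff_span T"
  unfolding diff_span_def by (rule fv.span_base) blast

lemma diff_span_mono: "S \<subseteq> T \<Longrightarrow> diff_span S \<subseteq> diff_span T"
  unfolding diff_span_def by (rule fv.span_mono) blast

lemma span_diff_span [simp]: "fv.span (diff_span T) = diff_span T"
  by (simp add: diff_span_def fv.span_span)

lemma diff_span_subset_span: "diff_span T \<subseteq> fv.span T"
  unfolding diff_span_def
  by (rule fv.span_minimal[OF _ fv.subspace_span]) (auto intro: fv.span_diff fv.span_base)

lemma diff_span_subset_supported_below:
  "T \<subseteq> supported_below n \<Longrightarrow> diff_span T \<subseteq> supported_below n"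
  using diff_span_subset_span span_subset_supported_below by blast

lemma linear_functional_vanishes_on_diff_span:
  fixes f :: "(nat \<Rightarrow> 'a::field) \<Rightarrow> 'a"
  assumes "x \<in> diff_span T" and "\<forall>a\<in>T. \<forall>b\<in>T. f a = f b"
    and add: "\<And>x y. f (x + y) = f x + f y" and "\<And>c x. f (fscale c x) = c * f x"
  shows "f x = 0"
proof -
  have diff_zero: "f (a - b) = 0" if "a \<in> T" and "b \<in> T" for a b
  proof -
    have "f (a - b) + f b = f a"
      using add[of "a - b" b] by simp
    moreover have "f a = f b"
      using assms(2) that by blast
    ultimately show ?thesis
      by simp
  qed
  show ?thesis
  proof (rule linear_functional_vanishes_on_span[OF assms(1)[unfolded diff_span_def]])
    fix z assume "z \<in> {x - y | x y. x \<in> T \<and> y \<in> T}"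
    then show "f z = 0"
      using diff_zero by blast
  qed (fact add assms(4))+
qed

lemma coord_vanishes_on_diff_span:
  assumes "\<forall>a\<in>T. \<forall>b\<in>T. a i = b i" and "x \<in> diff_span T"
  shows "x i = 0"
  using linear_functional_vanishes_on_diff_span[where f = "\<lambda>x. x i", OF assms(2,1)] by simp

lemma dim_diff_span_less:
  assumes "T \<subseteq> supported_below n" and "S \<subseteq> T"
    and "w \<in> diff_span T" and "w \<notin> diff_span S"
  shows "fv.dim (diff_span S) < fv.dim (diff_span T)"
  using dim_less_if_not_in_span[of "diff_span T" n "diff_span S" w] assms(3,4)
    diff_span_subset_supported_below[OF assms(1)] diff_span_mono[OF assms(2)]
  by simp

definition diffs_orthogonal :: "nat \<Rightarrow> (nat \<Rightarrow> 'a::field) set \<Rightarrow> (nat \<Rightarrow> 'a) set \<Rightarrow> bool" where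
  "diffs_orthogonal d A B \<longleftrightarrow> (\<forall>a\<in>A. \<forall>a'\<in>A. \<forall>b\<in>B. dotp d a b = dotp d a' b)"

lemma dotp_diff_span_zero:
  assumes "diffs_orthogonal d A B" and "x \<in> diff_span A" and "b \<in> B"
  shows "dotp d x b = 0"
  using linear_functional_vanishes_on_diff_span[where f = "\<lambda>x. dotp d x b", OF assms(2)]
    assms(1,3) dotp_add_left dotp_scale_left
  unfolding diffs_orthogonal_def by metis

lemma dim_diff_spans_sum_less:
  fixes A B :: "(nat \<Rightarrow> 'a::field) set"
  assumes "A \<subseteq> vecs d" and "B \<subseteq> vecs d" and "diffs_orthogonal d A B"
    and "b \<in> B" and "b \<notin> diff_span B"
  shows "fv.dim (diff_span A) + fv.dim (diff_span B) < d"
proof -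
  have A_supp: "A \<subseteq> supported_below d" and B_supp: "B \<subseteq> supported_below d"
    using assms(1,2) vecs_subset_supported_below by blast+
  have "\<forall>x\<in>diff_span A. \<forall>y\<in>fv.span B. dotp d x y = 0"
    using dotp_span_orthogonal[of "diff_span A" B] dotp_diff_span_zero[OF assms(3)]
    by (metis span_diff_span)
  then have "fv.dim (diff_span A) + fv.dim (fv.span B) \<le> d"
    using A_supp B_supp
    by (intro dim_orthogonal_le diff_span_subset_supported_below span_subset_supported_below) auto
  moreover have "fv.dim (diff_span B) < fv.dim B"
    using B_supp assms(4,5) diff_span_subset_span
    by (intro dim_less_if_not_in_span[where w = b]) (auto intro: fv.span_base)
  ultimately show ?thesis
    by simp
qed

section \<open>Monochromatic bipartitions\<close>

lemma constant_dotp_pair_bounds: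
  fixes A B :: "(nat \<Rightarrow> 'a::field) set"
  assumes "A \<subseteq> vecs d" and "B \<subseteq> vecs d" and "a0 \<in> A" and "b0 \<in> B" and "p \<noteq> 0"
    and dotp_eq: "\<forall>a\<in>A. \<forall>b\<in>B. dotp d a b = p \<and> p \<noteq> dotp d a a \<and> p \<noteq> dotp d b b"
  shows "\<exists>w\<in>diff_span (A \<union> B). w \<notin> diff_span A \<and> w \<notin> diff_span B"
    and "fv.dim (diff_span A) + fv.dim (diff_span B) < d"
proof -
  have AB: "diffs_orthogonal d A B" and BA: "diffs_orthogonal d B A"
    using dotp_eq dotp_commute unfolding diffs_orthogonal_def by metis+
  have "dotp d (a0 - b0) b0 \<noteq> 0" and "dotp d (a0 - b0) a0 \<noteq> 0"
    using dotp_eq assms(3,4) dotp_commute[of d b0 a0] by (auto simp: dotp_diff_left)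
  then have "a0 - b0 \<notin> diff_span A" and "a0 - b0 \<notin> diff_span B"
    using dotp_diff_span_zero[OF AB _ assms(4)] dotp_diff_span_zero[OF BA _ assms(3)] by blast+
  moreover have "a0 - b0 \<in> diff_span (A \<union> B)"
    using assms(3,4) by (intro diff_mem_diff_span) auto
  ultimately show "\<exists>w\<in>diff_span (A \<union> B). w \<notin> diff_span A \<and> w \<notin> diff_span B"
    by blast
  have "dotp d b0 a0 \<noteq> 0"
    using dotp_eq assms(3-5) dotp_commute[of d b0 a0] by simp
  then have "b0 \<notin> diff_span B"
    using dotp_diff_span_zero[OF BA _ assms(3)] by blast
  then show "fv.dim (diff_span A) + fv.dim (diff_span B) < d"
    using assms(1,2,4) AB by (intro dim_diff_spans_sum_less)
qed

lemma coordinate_separated_pair_bounds: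
  fixes A B :: "(nat \<Rightarrow> 'a::field) set"
  assumes "A \<subseteq> vecs d" and "B \<subseteq> vecs d" and "a0 \<in> A" and "b0 \<in> B" and "i < d"
    and A_coord: "\<forall>a\<in>A. a i = a0 i" and B_coord: "\<forall>b\<in>B. b i = b0 i"
    and "a0 i \<noteq> b0 i" and orth: "diffs_orthogonal d A B \<or> diffs_orthogonal d B A"
  shows "\<exists>w\<in>diff_span (A \<union> B). w \<notin> diff_span A \<and> w \<notin> diff_span B"
    and "fv.dim (diff_span A) + fv.dim (diff_span B) < d"
proof -
  have "\<forall>a\<in>A. \<forall>a'\<in>A. a i = a' i" and "\<forall>b\<in>B. \<forall>b'\<in>B. b i = b' i"
    using A_coord B_coord by metis+
  then have zero_A: "x \<in> diff_span A \<Longrightarrow> x i = 0" and zero_B: "x \<in> diff_span B \<Longrightarrow> x i = 0" for x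
    by (simp_all add: coord_vanishes_on_diff_span)
  have "(a0 - b0) i \<noteq> 0"
    using assms(8) by simp
  then have "a0 - b0 \<notin> diff_span A" and "a0 - b0 \<notin> diff_span B"
    using zero_A zero_B by blast+
  have "a0 i \<noteq> 0" and "b0 i \<noteq> 0"
    using assms(1-5) by (auto simp: vecs_def)
  then have "a0 \<notin> diff_span A" and "b0 \<notin> diff_span B"
    using zero_A zero_B by blast+
  have "a0 - b0 \<in> diff_span (A \<union> B)"
    using assms(3,4) by (intro diff_mem_diff_span) auto
  with \<open>a0 - b0 \<notin> diff_span A\<close> \<open>a0 - b0 \<notin> diff_span B\<close>
  show "\<exists>w\<in>diff_span (A \<union> B). w \<notin> diff_span A \<and> w \<notin> diff_span B"
    by blast
  from orth show "fv.dim (diff_span A) + fv.dim (diff_span B) < d"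
  proof
    assume "diffs_orthogonal d A B"
    then show ?thesis
      using assms(1,2,4) \<open>b0 \<notin> diff_span B\<close> by (intro dim_diff_spans_sum_less)
  next
    assume "diffs_orthogonal d B A"
    then have "fv.dim (diff_span B) + fv.dim (diff_span A) < d"
      using assms(1-3) \<open>a0 \<notin> diff_span A\<close> by (intro dim_diff_spans_sum_less)
    then show ?thesis
      by simp
  qed
qed

lemma first_diff_commute: "first_diff x y = first_diff y x"
  unfolding first_diff_def by (metis)

lemma first_diff_neq: "x \<noteq> y \<Longrightarrow> x (first_diff x y) \<noteq> y (first_diff x y)"
  unfolding first_diff_def by (rule LeastI_ex) (auto simp: fun_eq_iff)

lemma first_diff_less:
  assumes "x \<in> vecs d" and "y \<in> vecs d" and "x \<noteq> y"
  shows "first_diff x y < d"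
proof -
  obtain j where j: "x j \<noteq> y j"
    using assms(3) by (auto simp: fun_eq_iff)
  have "j < d"
  proof (rule ccontr)
    assume "\<not> j < d"
    then have "x j = 0" and "y j = 0"
      using assms(1,2) by (simp_all add: vecs_def)
    with j show False by simp
  qed
  moreover have "first_diff x y \<le> j"
    unfolding first_diff_def using j by (rule Least_le)
  ultimately show ?thesis
    by simp
qed

lemma phi_DOT:
  "phi d r x y = DOT p \<Longrightarrow> dotp d x y = p \<and> p \<noteq> 0 \<and> p \<noteq> dotp d x x \<and> p \<noteq> dotp d y y"
  by (auto simp: phi_def phi_ord_def Let_def dotp_commute split: if_splits)

lemma phi_coordinate_colour:
  "phi d r x y \<in> {ZERO i s, UP i s, DOWN i s} \<Longrightarrow> first_diff x y = i \<and> x i + y i = s"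
  by (auto simp: phi_def phi_ord_def Let_def first_diff_commute add.commute split: if_splits)

lemma phi_ord_coordinate_colour_dotp:
  "phi_ord d x y = ZERO i s \<Longrightarrow> dotp d x y = 0"
  "phi_ord d x y = UP i s \<Longrightarrow> dotp d x y = dotp d x x"
  "phi_ord d x y = DOWN i s \<Longrightarrow> dotp d x y = dotp d y y"
  by (auto simp: phi_ord_def Let_def split: if_splits)

lemma diffs_orthogonal_if_phi_ord_const:
  assumes const: "\<forall>x\<in>X. \<forall>y\<in>Y. phi_ord d x y = \<gamma>" and "\<forall>p. \<gamma> \<noteq> DOT p"
  shows "diffs_orthogonal d X Y \<or> diffs_orthogonal d Y X"
proof (cases \<gamma>)
  case (DOT p)
  with assms(2) show ?thesis by simp
next
  case (ZERO i s)
  then have "dotp d x y = 0" if "x \<in> X" and "y \<in> Y" for x y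
    using const that by (blast intro: phi_ord_coordinate_colour_dotp)
  then show ?thesis
    unfolding diffs_orthogonal_def by simp
next
  case (UP i s)
  then have "dotp d y x = dotp d x x" if "x \<in> X" and "y \<in> Y" for x y
    using const that phi_ord_coordinate_colour_dotp(2) dotp_commute by metis
  then show ?thesis
    unfolding diffs_orthogonal_def by simp
next
  case (DOWN i s)
  then have "dotp d x y = dotp d y y" if "x \<in> X" and "y \<in> Y" for x y
    using const that by (blast intro: phi_ord_coordinate_colour_dotp)
  then show ?thesis
    unfolding diffs_orthogonal_def by simp
qed

lemma phi_oriented:
  assumes "\<forall>a\<in>A. \<forall>b\<in>B. first_diff a b = i" and "\<forall>a\<in>A. a i = a0 i" and "\<forall>b\<in>B. b i = b0 i"
    and "A \<inter> B = {}" and "a0 \<in> A" and "b0 \<in> B"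
  shows "\<forall>a\<in>A. \<forall>b\<in>B. phi d r a b = (if lex_less r a0 b0 then phi_ord d a b else phi_ord d b a)"
proof (intro ballI)
  fix a b assume "a \<in> A" and "b \<in> B"
  then have "lex_less r a b = lex_less r a0 b0"
    using assms by (auto simp: lex_less_def)
  then show "phi d r a b = (if lex_less r a0 b0 then phi_ord d a b else phi_ord d b a)"
    by (simp add: phi_def)
qed

lemma diffs_orthogonal_if_phi_const:
  assumes mono: "\<forall>a\<in>A. \<forall>b\<in>B. phi d r a b = \<gamma>" and not_DOT: "\<forall>p. \<gamma> \<noteq> DOT p"
    and "\<forall>a\<in>A. \<forall>b\<in>B. first_diff a b = i" and "\<forall>a\<in>A. a i = a0 i" and "\<forall>b\<in>B. b i = b0 i"
    and "A \<inter> B = {}" and "a0 \<in> A" and "b0 \<in> B"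
  shows "diffs_orthogonal d A B \<or> diffs_orthogonal d B A"
proof -
  have orient:
    "\<forall>a\<in>A. \<forall>b\<in>B. phi d r a b = (if lex_less r a0 b0 then phi_ord d a b else phi_ord d b a)"
    using assms(3-8) by (rule phi_oriented)
  show ?thesis
  proof (cases "lex_less r a0 b0")
    case True
    then have "\<forall>a\<in>A. \<forall>b\<in>B. phi_ord d a b = \<gamma>"
      using orient mono by simp
    then show ?thesis
      using not_DOT diffs_orthogonal_if_phi_ord_const by blast
  next
    case False
    then have "\<forall>b\<in>B. \<forall>a\<in>A. phi_ord d b a = \<gamma>"
      using orient mono by simp
    then show ?thesis
      using not_DOT diffs_orthogonal_if_phi_ord_const by blast
  qed
qed

lemma monochromatic_pair_bounds:
  fixes A B :: "(nat \<Rightarrow> 'a::field) set"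
  assumes "A \<subseteq> vecs d" and "B \<subseteq> vecs d" and "A \<noteq> {}" and "B \<noteq> {}" and "A \<inter> B = {}"
    and mono: "\<forall>a\<in>A. \<forall>b\<in>B. phi d r a b = \<gamma>"
  shows "\<exists>w\<in>diff_span (A \<union> B). w \<notin> diff_span A \<and> w \<notin> diff_span B"
    and "fv.dim (diff_span A) + fv.dim (diff_span B) < d"
proof -
  obtain a0 b0 where a0: "a0 \<in> A" and b0: "b0 \<in> B"
    using assms(3,4) by blast
  have "(\<exists>w\<in>diff_span (A \<union> B). w \<notin> diff_span A \<and> w \<notin> diff_span B)
    \<and> fv.dim (diff_span A) + fv.dim (diff_span B) < d"
  proof (cases "\<exists>p. \<gamma> = DOT p")
    case True
    then obtain p where "\<gamma> = DOT p" ..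
    then have "\<forall>a\<in>A. \<forall>b\<in>B. dotp d a b = p \<and> p \<noteq> dotp d a a \<and> p \<noteq> dotp d b b" and "p \<noteq> 0"
      using mono phi_DOT a0 b0 by blast+
    then show ?thesis
      using constant_dotp_pair_bounds[OF assms(1,2) a0 b0] by blast
  next
    case False
    then obtain i s where "\<gamma> \<in> {ZERO i s, UP i s, DOWN i s}"
      by (cases \<gamma>) auto
    then have coord: "\<forall>a\<in>A. \<forall>b\<in>B. first_diff a b = i \<and> a i + b i = s"
      using mono phi_coordinate_colour by metis
    have "a0 \<noteq> b0"
      using a0 b0 assms(5) by blast
    then have "i < d" and "a0 i \<noteq> b0 i"
      using coord a0 b0 assms(1,2) first_diff_less[of a0 d b0] first_diff_neq[of a0 b0] by auto
    have A_coord: "\<forall>a\<in>A. a i = a0 i" and B_coord: "\<forall>b\<in>B. b i = b0 i"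
      using coord a0 b0 by (metis add_right_cancel, metis add_left_cancel)
    have "diffs_orthogonal d A B \<or> diffs_orthogonal d B A"
      using mono False coord A_coord B_coord assms(5) a0 b0
      by (intro diffs_orthogonal_if_phi_const[where i = i]) auto
    then show ?thesis
      using coordinate_separated_pair_bounds[OF assms(1,2) a0 b0 \<open>i < d\<close> A_coord B_coord]
        \<open>a0 i \<noteq> b0 i\<close>
      by blast
  qed
  then show "\<exists>w\<in>diff_span (A \<union> B). w \<notin> diff_span A \<and> w \<notin> diff_span B"
    and "fv.dim (diff_span A) + fv.dim (diff_span B) < d"
    by blast+
qed

section \<open>Leftover structures\<close>

lemma leftover_card_le:
  fixes T :: "(nat \<Rightarrow> 'a::field) set"
  assumes "leftover (phi d r) T" and "T \<subseteq> vecs d" and "d \<le> 4"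
  shows "finite T \<and> card T \<le> max 1 (2 * fv.dim (diff_span T))"
  using assms(1,2)
proof (induction rule: leftover.induct)
  case (single v)
  then show ?case by simp
next
  case (split A B \<gamma>)
  have count: "m + k \<le> max 1 (2 * c)"
    if "m \<le> max 1 (2 * a)" "k \<le> max 1 (2 * b)" "a + b < 4" "a < c" "b < c" for m k a b c :: nat
    using that unfolding max_def by presburger
  have A_vecs: "A \<subseteq> vecs d" and B_vecs: "B \<subseteq> vecs d"
    using split.prems by auto
  note bounds = monochromatic_pair_bounds[OF A_vecs B_vecs split.hyps(1-3)
      \<open>\<forall>a\<in>A. \<forall>b\<in>B. phi d r a b = \<gamma>\<close>]
  obtain w where w: "w \<in> diff_span (A \<union> B)" "w \<notin> diff_span A" "w \<notin> diff_span B"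
    using bounds(1) by blast
  have "A \<union> B \<subseteq> supported_below d"
    using split.prems vecs_subset_supported_below by blast
  then have "fv.dim (diff_span A) < fv.dim (diff_span (A \<union> B))"
    and "fv.dim (diff_span B) < fv.dim (diff_span (A \<union> B))"
    using w by (auto intro: dim_diff_span_less)
  moreover have "fv.dim (diff_span A) + fv.dim (diff_span B) < 4"
    using bounds(2) assms(3) by linarith
  ultimately have "card A + card B \<le> max 1 (2 * fv.dim (diff_span (A \<union> B)))"
    using split.IH(1)[OF A_vecs, THEN conjunct2] split.IH(2)[OF B_vecs, THEN conjunct2] count
    by blast
  moreover have "finite A" and "finite B"
    using split.IH(1)[OF A_vecs] split.IH(2)[OF B_vecs] by blast+
  moreover from this have "card (A \<union> B) = card A + card B"
    using split.hyps(3) by (rule card_Un_disjoint)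
  ultimately show ?case
    by (simp only: finite_Un)
qed

theorem corollary3p13:
  fixes r :: "('a::{field,finite}) rel" and S :: "(nat \<Rightarrow> 'a) set"
  assumes "odd (card (UNIV :: 'a set))"
    and "linear_order_on (UNIV - {0}) r"
    and "S \<subseteq> vecs 4"
    and "card S = 8"
  shows "\<not> leftover (phi 4 r) S"
proof
  assume "leftover (phi 4 r) S"
  then show False
  proof cases
    case (single v)
    with assms(4) show False by simp
  next
    case (split A B \<gamma>)
    have count: "m + k < 8"
      if "m \<le> max 1 (2 * a)" "k \<le> max 1 (2 * b)" "a + b < 4" for m k a b :: nat
      using that unfolding max_def by presburger
    have A_vecs: "A \<subseteq> vecs 4" and B_vecs: "B \<subseteq> vecs 4"
      using assms(3) split(1) by auto
    have "finite A" "card A \<le> max 1 (2 * fv.dim (diff_span A))"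
      and "finite B" "card B \<le> max 1 (2 * fv.dim (diff_span B))"
      using leftover_card_le[OF \<open>leftover (phi 4 r) A\<close> A_vecs]
        leftover_card_le[OF \<open>leftover (phi 4 r) B\<close> B_vecs]
      by simp_all
    moreover have "fv.dim (diff_span A) + fv.dim (diff_span B) < 4"
      by (rule monochromatic_pair_bounds(2)[OF A_vecs B_vecs split(2-4)]) fact
    ultimately have "card A + card B < 8"
      using count by blast
    then show False
      using assms(4) split(1,4) card_Un_disjoint[of A B] \<open>finite A\<close> \<open>finite B\<close> by simp
  qed
qed

end
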